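(* For $u=(u_1,\dots,u_n)$ and $v=(v_1,\dots,v_n)$, \begin{multline*} \sum_{w\in\mathfrak S_u\times\mathfrak S_v}w\biggl(\prod_{i=1}^n\frac{1}{u_i-tv_i}\prod_{1\le i<j\le n}\frac{u_i-tu_j}{u_i-u_j}\cdot\frac{u_i-v_j}{u_i-tv_j}\cdot\frac{v_i-tv_j}{v_i-v_j}\biggr)\\ =\frac{(t;t)_n}{(1-t)^n}\sum_{w\in\mathfrak S_v}w\biggl(\prod_{i=1}^n\frac{1}{u_i-tv_i}\prod_{1\le i<j\le n}\frac{u_i-v_j}{u_i-tv_j}\cdot\frac{v_i-tv_j}{v_i-v_j}\biggr). \end{multline*}
   Context: $\mathfrak S_u$ (resp. $\mathfrak S_v$) is the symmetric group acting by permuting the variables $u_1,\dots,u_n$ (resp. $v_1,\dots,v_n$), and $\mathfrak S_u\times\mathfrak S_v$ permutes both sets independently; $w(f)$ denotes the function obtained by permuting variables. $(t;t)_n=(1-t)(1-t^2)\cdots(1-t^n)$. *)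

theory Defs
  imports "HOL-Combinatorics.Permutations" Complex_Main
begin

definition qpoch :: "complex \<Rightarrow> nat \<Rightarrow> complex" where
  "qpoch t n = (\<Prod>k=1..n. 1 - t ^ k)"

definition lhs_summand :: "nat \<Rightarrow> complex \<Rightarrow> (nat \<Rightarrow> complex) \<Rightarrow> (nat \<Rightarrow> complex) \<Rightarrow> complex" where
  "lhs_summand n t u v =
     (\<Prod>i<n. 1 / (u i - t * v i)) *
     (\<Prod>i<n. \<Prod>j\<in>{i<..<n}.
        (u i - t * u j) / (u i - u j) * ((u i - v j) / (u i - t * v j)) * ((v i - t * v j) / (v i - v j)))"

definition rhs_summand :: "nat \<Rightarrow> complex \<Rightarrow> (nat \<Rightarrow> complex) \<Rightarrow> (nat \<Rightarrow> complex) \<Rightarrow> complex" where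
  "rhs_summand n t u v =
     (\<Prod>i<n. 1 / (u i - t * v i)) *
     (\<Prod>i<n. \<Prod>j\<in>{i<..<n}.
        (u i - v j) / (u i - t * v j) * ((v i - t * v j) / (v i - v j)))"

end

theory Submission
  imports Defs
begin

text \<open>
  The left-hand summand factors as \<open>hl_prod n t u * rhs_summand n t u w\<close>, so the left-hand side
  is the sum over \<open>\<sigma>\<close> of \<open>hl_prod n t (u \<circ> \<sigma>) * R (u \<circ> \<sigma>)\<close>, where \<open>R u\<close> is the
  sum over \<open>\<tau>\<close> on the right. \<open>R\<close> is symmetric in \<open>u\<close>: for an adjacent transposition \<open>s\<close>,
  the summands for \<open>\<tau>\<close> and \<open>\<tau> \<circ> s\<close> share a cofactor that does not see \<open>s\<close>, and the sum of
  the two remaining four-variable factors is symmetric in \<open>u k, u (Suc k)\<close>. Hence \<open>R u\<close> can be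
  pulled out, and what remains is the Hall-Littlewood normalisation
  \<open>\<Sum>\<sigma>. hl_prod n t (x \<circ> \<sigma>) = \<Prod>k<n. [k+1]\<^sub>t\<close>, proved by induction on \<open>n\<close> from the
  partial-fraction identity \<open>\<Sum>b\<in>S. \<Prod>i\<in>S-{b}. (x i - t x b)/(x i - x b) = [card S]\<^sub>t\<close>.
\<close>

definition pivot_factor :: "'a::field \<Rightarrow> ('b \<Rightarrow> 'a) \<Rightarrow> 'b set \<Rightarrow> 'b \<Rightarrow> 'a" where
  "pivot_factor t x S k = (\<Prod>i\<in>S - {k}. (x i - t * x k) / (x i - x k))"

lemma pivot_factor_insert:
  assumes "finite S" "a \<notin> S" "k \<in> S"
  shows "pivot_factor t x (insert a S) k = (x a - t * x k) / (x a - x k) * pivot_factor t x S k"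
proof -
  have "insert a S - {k} = insert a (S - {k})" using assms by auto
  then show ?thesis unfolding pivot_factor_def using assms by simp
qed

lemma pivot_factor_insert_self:
  "a \<notin> S \<Longrightarrow> pivot_factor t x (insert a S) a = (\<Prod>i\<in>S. (x i - t * x a) / (x i - x a))"
  unfolding pivot_factor_def by simp

lemma prod_ratio_partial_fractions:
  fixes x :: "'b \<Rightarrow> 'a::field"
  assumes "finite S" "inj_on x S" "z \<notin> x ` S"
  shows "(\<Prod>i\<in>S. (x i - t * z) / (x i - z)) =
         t ^ card S + (1 - t) * (\<Sum>k\<in>S. pivot_factor t x S k * x k / (x k - z))"
  using assms
proof (induction S arbitrary: z rule: finite_induct)
  case empty
  then show ?case by simp
next
  case (insert a S)
  have inj: "inj_on x S" and xa: "x a \<notin> x ` S" and zS: "z \<notin> x ` S" and za: "x a \<noteq> z"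
    using insert by auto
  define \<alpha> where "\<alpha> = (x a - t * z) / (x a - z)"
  define \<beta> where "\<beta> = x a / (x a - z)"
  define G where "G = (\<Sum>k\<in>S. pivot_factor t x S k * x k / (x k - z))"
  define H where "H = (\<Sum>k\<in>S. pivot_factor t x S k * x k / (x k - x a))"
  have \<alpha>_\<beta>: "\<alpha> = t + (1 - t) * \<beta>"
    unfolding \<alpha>_def \<beta>_def using za by (simp add: field_simps)
  \<comment> \<open>Partial fractions in \<open>x k\<close> of the new factor \<open>(x a - t * x k) / (x a - x k)\<close> times \<open>x k / (x k - z)\<close>.\<close>
  have step: "pivot_factor t x (insert a S) k * x k / (x k - z) =
      \<alpha> * (pivot_factor t x S k * x k / (x k - z)) - (1 - t) * (pivot_factor t x S k * x k / (x k - x a)) * \<beta>"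
    if k: "k \<in> S" for k
  proof -
    have "x k \<noteq> z" "x k \<noteq> x a" using k zS xa by (auto simp: image_iff)
    then show ?thesis
      unfolding pivot_factor_insert[OF insert(1,2) k] \<alpha>_def \<beta>_def using za
      by (simp add: divide_simps) (simp add: algebra_simps)
  qed
  have "(\<Prod>i\<in>insert a S. (x i - t * z) / (x i - z)) = \<alpha> * (t ^ card S + (1 - t) * G)"
    using insert zS inj unfolding \<alpha>_def G_def by simp
  also have "\<dots> = t ^ Suc (card S) + (1 - t) * ((t ^ card S + (1 - t) * H) * \<beta> + (\<alpha> * G - (1 - t) * H * \<beta>))"
    unfolding \<alpha>_\<beta> by (simp add: algebra_simps)
  also have "\<alpha> * G - (1 - t) * H * \<beta> = (\<Sum>k\<in>S. pivot_factor t x (insert a S) k * x k / (x k - z))"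
    unfolding G_def H_def
    by (simp add: step sum_subtractf sum_distrib_left sum_distrib_right)
  also have "t ^ card S + (1 - t) * H = pivot_factor t x (insert a S) a"
    using insert.IH[OF inj xa] insert(2) unfolding H_def by (simp add: pivot_factor_insert_self)
  finally show ?case
    using insert(1,2) unfolding \<beta>_def by simp
qed

lemma sum_pivot_factor:
  fixes x :: "'b \<Rightarrow> 'a::field"
  assumes "finite S" "inj_on x S"
  shows "(\<Sum>k\<in>S. pivot_factor t x S k) = (\<Sum>m<card S. t ^ m)"
  using assms
proof (induction S rule: finite_induct)
  case empty
  then show ?case by simp
next
  case (insert a S)
  have inj: "inj_on x S" and xa: "x a \<notin> x ` S" using insert by auto
  have step: "pivot_factor t x (insert a S) k =
      pivot_factor t x S k - (1 - t) * (pivot_factor t x S k * x k / (x k - x a))" if k: "k \<in> S" for k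
  proof -
    have "x k \<noteq> x a" using k xa by (auto simp: image_iff)
    then show ?thesis unfolding pivot_factor_insert[OF insert(1,2) k]
      by (simp add: field_simps)
  qed
  have "(\<Sum>k\<in>insert a S. pivot_factor t x (insert a S) k) =
      (\<Sum>k\<in>S. pivot_factor t x S k) - (1 - t) * (\<Sum>k\<in>S. pivot_factor t x S k * x k / (x k - x a))
      + pivot_factor t x (insert a S) a"
    using insert(1,2) by (simp add: step sum_subtractf sum_distrib_left)
  then show ?case
    using insert prod_ratio_partial_fractions[OF insert(1) inj xa, of t]
    by (simp add: pivot_factor_insert_self)
qed

definition hl_prod :: "nat \<Rightarrow> 'a::field \<Rightarrow> (nat \<Rightarrow> 'a) \<Rightarrow> 'a" where
  "hl_prod n t x = (\<Prod>i<n. \<Prod>j\<in>{i<..<n}. (x i - t * x j) / (x i - x j))"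

lemma hl_prod_Suc: "hl_prod (Suc n) t x = (\<Prod>i<n. (x i - t * x n) / (x i - x n)) * hl_prod n t x"
proof -
  have "{n<..<Suc n} = {}" by auto
  then have "hl_prod (Suc n) t x = (\<Prod>i<n. \<Prod>j\<in>{i<..<Suc n}. (x i - t * x j) / (x i - x j))"
    unfolding hl_prod_def by simp
  also have "\<dots> = (\<Prod>i<n. (x i - t * x n) / (x i - x n) * (\<Prod>j\<in>{i<..<n}. (x i - t * x j) / (x i - x j)))"
  proof (rule prod.cong[OF refl])
    fix i assume "i \<in> {..<n}"
    then have "{i<..<Suc n} = insert n {i<..<n}" by auto
    then show "(\<Prod>j\<in>{i<..<Suc n}. (x i - t * x j) / (x i - x j)) =
      (x i - t * x n) / (x i - x n) * (\<Prod>j\<in>{i<..<n}. (x i - t * x j) / (x i - x j))"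
      by simp
  qed
  also have "\<dots> = (\<Prod>i<n. (x i - t * x n) / (x i - x n)) * hl_prod n t x"
    unfolding hl_prod_def by (rule prod.distrib)
  finally show ?thesis .
qed

lemma bij_betw_transpose_comp_lessThan:
  assumes "q permutes {..<n}" "b < Suc n"
  shows "bij_betw (transpose n b \<circ> q) {..<n} ({..<Suc n} - {b})"
proof -
  have qn: "q n = n" using assms(1) by (simp add: permutes_not_in)
  have "transpose n b \<circ> q permutes {..<Suc n}"
    using assms by (intro permutes_compose permutes_swap_id permutes_subset[OF assms(1)]) auto
  then have "bij_betw (transpose n b \<circ> q) ({..<Suc n} - {n}) ({..<Suc n} - {(transpose n b \<circ> q) n})"
    using assms(2) qn by (intro bij_betw_DiffI permutes_imp_bij) auto
  then show ?thesis using qn by (simp add: lessThan_Suc)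
qed

lemma hl_prod_Suc_transpose:
  assumes "q permutes {..<n}" "b < Suc n"
  shows "hl_prod (Suc n) t (x \<circ> (transpose n b \<circ> q)) =
    pivot_factor t x {..<Suc n} b * hl_prod n t (x \<circ> transpose n b \<circ> q)"
proof -
  have "(\<Prod>i<n. (x ((transpose n b \<circ> q) i) - t * x b) / (x ((transpose n b \<circ> q) i) - x b))
      = pivot_factor t x {..<Suc n} b"
    unfolding pivot_factor_def by (rule prod.reindex_bij_betw[OF bij_betw_transpose_comp_lessThan[OF assms]])
  moreover have "q n = n" using assms(1) by (simp add: permutes_not_in)
  ultimately show ?thesis by (simp add: hl_prod_Suc comp_assoc)
qed

lemma sum_permutes_hl_prod:
  fixes x :: "nat \<Rightarrow> 'a::field"
  assumes "inj_on x {..<n}"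
  shows "(\<Sum>\<sigma>\<in>{\<sigma>. \<sigma> permutes {..<n}}. hl_prod n t (x \<circ> \<sigma>)) = (\<Prod>k<n. \<Sum>m<Suc k. t ^ m)"
  using assms
proof (induction n arbitrary: x)
  case 0
  then show ?case by (simp add: hl_prod_def permutes_empty)
next
  case (Suc n)
  have inj: "inj_on (x \<circ> transpose n b) {..<n}" if "b < Suc n" for b
  proof (rule comp_inj_on)
    show "inj_on (transpose n b) {..<n}" by (rule inj_on_transpose)
    have "transpose n b ` {..<n} \<subseteq> {..<Suc n}" using that by (auto simp: transpose_def)
    then show "inj_on x (transpose n b ` {..<n})" using Suc.prems by (rule inj_on_subset[rotated])
  qed
  have "(\<Sum>\<sigma>\<in>{\<sigma>. \<sigma> permutes {..<Suc n}}. hl_prod (Suc n) t (x \<circ> \<sigma>))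
      = (\<Sum>b<Suc n. \<Sum>q\<in>{q. q permutes {..<n}}. hl_prod (Suc n) t (x \<circ> (transpose n b \<circ> q)))"
    unfolding lessThan_Suc by (rule sum_over_permutations_insert) auto
  also have "\<dots> = (\<Sum>b<Suc n. pivot_factor t x {..<Suc n} b * (\<Prod>k<n. \<Sum>m<Suc k. t ^ m))"
  proof (rule sum.cong[OF refl])
    fix b assume b: "b \<in> {..<Suc n}"
    then have "(\<Sum>q\<in>{q. q permutes {..<n}}. hl_prod (Suc n) t (x \<circ> (transpose n b \<circ> q)))
        = (\<Sum>q\<in>{q. q permutes {..<n}}. pivot_factor t x {..<Suc n} b * hl_prod n t (x \<circ> transpose n b \<circ> q))"
      by (intro sum.cong) (simp_all add: hl_prod_Suc_transpose)
    also have "\<dots> = pivot_factor t x {..<Suc n} b * (\<Prod>k<n. \<Sum>m<Suc k. t ^ m)"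
      using b by (simp add: sum_distrib_left[symmetric] Suc.IH[OF inj] del: sum.lessThan_Suc)
    finally show "(\<Sum>q\<in>{q. q permutes {..<n}}. hl_prod (Suc n) t (x \<circ> (transpose n b \<circ> q)))
        = pivot_factor t x {..<Suc n} b * (\<Prod>k<n. \<Sum>m<Suc k. t ^ m)" .
  qed
  also have "\<dots> = (\<Prod>k<Suc n. \<Sum>m<Suc k. t ^ m)"
    using sum_pivot_factor[OF _ Suc.prems, of t] by (simp add: sum_distrib_right[symmetric] mult.commute)
  finally show ?case .
qed

lemma prod_sum_powers_eq_qpoch:
  assumes "t \<noteq> 1"
  shows "(\<Prod>k<n. \<Sum>m<Suc k. t ^ m) = qpoch t n / (1 - t) ^ n"
proof (induction n)
  case 0
  then show ?case by (simp add: qpoch_def)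
next
  case (Suc n)
  have q: "qpoch t (Suc n) = qpoch t n * (1 - t ^ Suc n)"
    unfolding qpoch_def by (simp add: prod.cl_ivl_Suc)
  have s: "(\<Sum>m<Suc n. t ^ m) = (1 - t ^ Suc n) / (1 - t)"
    using assms by (simp add: sum_gp_strict del: sum.lessThan_Suc)
  show ?case unfolding prod.lessThan_Suc Suc.IH s q using assms by (simp add: field_simps)
qed

lemma invariant_under_permutes_if_adjacent:
  assumes adjacent: "\<And>u k. Q u \<Longrightarrow> Suc k < n \<Longrightarrow> f (u \<circ> transpose k (Suc k)) = f u"
    and closed: "\<And>u \<sigma>. Q u \<Longrightarrow> \<sigma> permutes {..<n} \<Longrightarrow> Q (u \<circ> \<sigma>)"
    and "\<sigma> permutes {..<n}" "Q u"
  shows "f (u \<circ> \<sigma>) = f u"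
proof -
  have transposition: "f (u \<circ> transpose a b) = f u" if "a < b" "b < n" "Q u" for a b u
    using that
  proof (induction b arbitrary: u)
    case 0
    then show ?case by simp
  next
    case (Suc b)
    show ?case
    proof (cases "a = b")
      case True
      show ?thesis using Suc.prems(3,2) unfolding True by (rule adjacent)
    next
      case False
      let ?s = "transpose b (Suc b)"
      have s: "?s permutes {..<n}" and ab: "transpose a b permutes {..<n}"
        using Suc.prems by (auto intro!: permutes_swap_id)
      have "transpose a (Suc b) = ?s \<circ> transpose a b \<circ> ?s"
        using False Suc.prems(1) by (auto simp: fun_eq_iff transpose_def)
      then have "f (u \<circ> transpose a (Suc b)) = f (u \<circ> ?s \<circ> transpose a b \<circ> ?s)"
        by (simp add: comp_assoc)
      also have "\<dots> = f (u \<circ> ?s \<circ> transpose a b)"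
        using Suc.prems by (intro adjacent closed s ab) auto
      also have "\<dots> = f (u \<circ> ?s)"
        using False Suc.prems by (intro Suc.IH closed s) auto
      also have "\<dots> = f u"
        using Suc.prems by (intro adjacent) auto
      finally show ?thesis .
    qed
  qed
  from assms(3) finite_lessThan assms(4) show ?thesis
  proof (induction \<sigma> arbitrary: u rule: permutes_induct)
    case id
    then show ?case by simp
  next
    case (swap a b p)
    have "f (u \<circ> (transpose a b \<circ> p)) = f (u \<circ> transpose a b \<circ> p)"
      by (simp add: comp_assoc)
    also have "\<dots> = f (u \<circ> transpose a b)"
      using swap by (intro swap.IH closed permutes_swap_id) auto
    also have "\<dots> = f u"
      using swap transposition[of a b u] transposition[of b a u]
      by (cases "a < b") (auto simp: transpose_commute)
    finally show ?case .
  qed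
qed

definition pairs_except :: "nat \<Rightarrow> nat \<Rightarrow> (nat \<times> nat) set" where
  "pairs_except n k = (SIGMA i:{..<n}. {i<..<n}) - {(k, Suc k)}"

lemma prod_pairs_except_transpose:
  assumes "Suc k < n" "f \<in> {id, transpose k (Suc k)}" "h \<in> {id, transpose k (Suc k)}"
  shows "(\<Prod>(i, j)\<in>pairs_except n k. g (f i) (h j)) = (\<Prod>(i, j)\<in>pairs_except n k. g i j)"
proof -
  have "map_prod f h p \<in> pairs_except n k" if "p \<in> pairs_except n k" for p
    using assms that by (cases p) (auto simp: pairs_except_def transpose_def split: if_splits)
  moreover have "map_prod f h (map_prod f h p) = p" for p
    using assms by (cases p) auto
  ultimately have "bij_betw (map_prod f h) (pairs_except n k) (pairs_except n k)"
    by (intro bij_betw_byWitness[of _ "map_prod f h"]) auto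
  from prod.reindex_bij_betw[OF this, of "case_prod g"] show ?thesis
    by (simp add: case_prod_beta)
qed

text \<open>The factors of \<open>rhs_summand\<close> involving only the positions \<open>k, Suc k\<close>, with
  \<open>a, b = u k, u (Suc k)\<close> and \<open>x, y = w k, w (Suc k)\<close>.\<close>
definition rhs_core :: "complex \<Rightarrow> complex \<Rightarrow> complex \<Rightarrow> complex \<Rightarrow> complex \<Rightarrow> complex" where
  "rhs_core t a b x y =
     1 / (a - t * x) * (1 / (b - t * y)) * ((a - y) / (a - t * y)) * ((x - t * y) / (x - y))"

definition rhs_cofactor :: "nat \<Rightarrow> complex \<Rightarrow> nat \<Rightarrow> (nat \<Rightarrow> complex) \<Rightarrow> (nat \<Rightarrow> complex) \<Rightarrow> complex" where
  "rhs_cofactor n t k u w =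
     (\<Prod>i\<in>{..<n} - {k, Suc k}. 1 / (u i - t * w i)) *
     (\<Prod>(i, j)\<in>pairs_except n k. (u i - w j) / (u i - t * w j)) *
     (\<Prod>(i, j)\<in>pairs_except n k. (w i - t * w j) / (w i - w j))"

lemma rhs_summand_split:
  assumes "Suc k < n"
  shows "rhs_summand n t u w = rhs_core t (u k) (u (Suc k)) (w k) (w (Suc k)) * rhs_cofactor n t k u w"
proof -
  have "(\<Prod>i<n. 1 / (u i - t * w i)) =
      (\<Prod>i\<in>insert k (insert (Suc k) ({..<n} - {k, Suc k})). 1 / (u i - t * w i))"
    using assms by (intro prod.cong) auto
  also have "\<dots> = 1 / (u k - t * w k) * (1 / (u (Suc k) - t * w (Suc k))) *
      (\<Prod>i\<in>{..<n} - {k, Suc k}. 1 / (u i - t * w i))"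
    by (simp add: mult.assoc)
  finally have diagonal: "(\<Prod>i<n. 1 / (u i - t * w i)) =
      1 / (u k - t * w k) * (1 / (u (Suc k) - t * w (Suc k))) * (\<Prod>i\<in>{..<n} - {k, Suc k}. 1 / (u i - t * w i))" .
  let ?P = "SIGMA i:{..<n}. {i<..<n}"
  let ?A = "\<lambda>i j. (u i - w j) / (u i - t * w j)" and ?B = "\<lambda>i j. (w i - t * w j) / (w i - w j)"
  have P: "finite ?P" "(k, Suc k) \<in> ?P"
    using assms by auto
  have "(\<Prod>i<n. \<Prod>j\<in>{i<..<n}. ?A i j * ?B i j) = (\<Prod>(i, j)\<in>?P. ?A i j * ?B i j)"
    by (subst prod.Sigma) auto
  also have "\<dots> = ?A k (Suc k) * ?B k (Suc k) * (\<Prod>(i, j)\<in>pairs_except n k. ?A i j * ?B i j)"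
    unfolding pairs_except_def by (subst prod.remove[OF P]) simp
  also have "(\<Prod>(i, j)\<in>pairs_except n k. ?A i j * ?B i j) =
      (\<Prod>(i, j)\<in>pairs_except n k. ?A i j) * (\<Prod>(i, j)\<in>pairs_except n k. ?B i j)"
    unfolding case_prod_unfold by (rule prod.distrib)
  finally show ?thesis
    unfolding rhs_summand_def rhs_core_def rhs_cofactor_def diagonal by (simp only: ac_simps)
qed

lemma rhs_cofactor_transpose:
  assumes "Suc k < n"
  shows "rhs_cofactor n t k (u \<circ> transpose k (Suc k)) w = rhs_cofactor n t k u w"
    and "rhs_cofactor n t k u (w \<circ> transpose k (Suc k)) = rhs_cofactor n t k u w"
  using assms
    prod_pairs_except_transpose[of k n _ id "\<lambda>i j. (u i - w j) / (u i - t * w j)"]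
    prod_pairs_except_transpose[of k n id _ "\<lambda>i j. (u i - w j) / (u i - t * w j)"]
    prod_pairs_except_transpose[of k n _ _ "\<lambda>i j. (w i - t * w j) / (w i - w j)"]
  unfolding rhs_cofactor_def by simp_all

lemma rhs_core_symmetrized_swap:
  fixes a b x y t :: complex
  assumes "x \<noteq> y" "a \<noteq> t * x" "a \<noteq> t * y" "b \<noteq> t * x" "b \<noteq> t * y"
  shows "rhs_core t b a x y + rhs_core t b a y x = rhs_core t a b x y + rhs_core t a b y x"
proof -
  have "a - t * x \<noteq> 0" "a - t * y \<noteq> 0" "b - t * x \<noteq> 0" "b - t * y \<noteq> 0" "x - y \<noteq> 0" "y - x \<noteq> 0"
    using assms by auto
  then show ?thesis unfolding rhs_core_def by (simp add: divide_simps) (simp add: algebra_simps)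
qed

lemma rhs_summand_symmetrized_transpose:
  assumes k: "Suc k < n" and w: "w k \<noteq> w (Suc k)" and uw: "\<forall>i<n. \<forall>j<n. u i \<noteq> t * w j"
  shows "rhs_summand n t (u \<circ> transpose k (Suc k)) w + rhs_summand n t (u \<circ> transpose k (Suc k)) (w \<circ> transpose k (Suc k))
       = rhs_summand n t u w + rhs_summand n t u (w \<circ> transpose k (Suc k))"
proof -
  let ?E = "rhs_cofactor n t k u w"
  have "u k \<noteq> t * w k" "u k \<noteq> t * w (Suc k)" "u (Suc k) \<noteq> t * w k" "u (Suc k) \<noteq> t * w (Suc k)"
    using uw k by auto
  then have "rhs_core t (u (Suc k)) (u k) (w k) (w (Suc k)) + rhs_core t (u (Suc k)) (u k) (w (Suc k)) (w k)
      = rhs_core t (u k) (u (Suc k)) (w k) (w (Suc k)) + rhs_core t (u k) (u (Suc k)) (w (Suc k)) (w k)"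
    using w by (intro rhs_core_symmetrized_swap) auto
  moreover have "rhs_summand n t (u \<circ> transpose k (Suc k)) w = rhs_core t (u (Suc k)) (u k) (w k) (w (Suc k)) * ?E"
    "rhs_summand n t (u \<circ> transpose k (Suc k)) (w \<circ> transpose k (Suc k)) = rhs_core t (u (Suc k)) (u k) (w (Suc k)) (w k) * ?E"
    "rhs_summand n t u w = rhs_core t (u k) (u (Suc k)) (w k) (w (Suc k)) * ?E"
    "rhs_summand n t u (w \<circ> transpose k (Suc k)) = rhs_core t (u k) (u (Suc k)) (w (Suc k)) (w k) * ?E"
    by (simp_all add: rhs_summand_split[OF k] rhs_cofactor_transpose[OF k])
  ultimately show ?thesis
    by (simp only: distrib_right[symmetric])
qed

definition rhs_sum :: "nat \<Rightarrow> complex \<Rightarrow> (nat \<Rightarrow> complex) \<Rightarrow> (nat \<Rightarrow> complex) \<Rightarrow> complex" where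
  "rhs_sum n t u v = (\<Sum>\<tau>\<in>{\<tau>. \<tau> permutes {..<n}}. rhs_summand n t u (v \<circ> \<tau>))"

lemma rhs_sum_transpose_adjacent:
  assumes k: "Suc k < n" and v: "inj_on v {..<n}" and uv: "\<forall>i<n. \<forall>j<n. u i \<noteq> t * v j"
  shows "rhs_sum n t (u \<circ> transpose k (Suc k)) v = rhs_sum n t u v"
proof -
  let ?s = "transpose k (Suc k)" and ?P = "{\<tau>. \<tau> permutes {..<n}}"
  have s: "?s permutes {..<n}"
    using k by (intro permutes_swap_id) auto
  \<comment> \<open>Reindexing by \<open>\<tau> \<mapsto> \<tau> \<circ> s\<close> doubles the sum into one over the symmetrized summands.\<close>
  have double: "2 * rhs_sum n t u' v = (\<Sum>\<tau>\<in>?P. rhs_summand n t u' (v \<circ> \<tau>) + rhs_summand n t u' (v \<circ> \<tau> \<circ> ?s))"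
    for u'
    using sum_permutations_compose_right[OF s, of "\<lambda>\<tau>. rhs_summand n t u' (v \<circ> \<tau>)"]
    by (simp add: rhs_sum_def sum.distrib comp_assoc)
  have "rhs_summand n t (u \<circ> ?s) (v \<circ> \<tau>) + rhs_summand n t (u \<circ> ?s) (v \<circ> \<tau> \<circ> ?s)
      = rhs_summand n t u (v \<circ> \<tau>) + rhs_summand n t u (v \<circ> \<tau> \<circ> ?s)" if \<tau>: "\<tau> \<in> ?P" for \<tau>
  proof (rule rhs_summand_symmetrized_transpose[OF k])
    have \<tau>: "\<tau> permutes {..<n}"
      using \<tau> by simp
    have "\<tau> k \<noteq> \<tau> (Suc k)"
      using permutes_inj[OF \<tau>] by (metis injD n_not_Suc_n)
    moreover have "\<tau> k \<in> {..<n}" "\<tau> (Suc k) \<in> {..<n}"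
      using k permutes_in_image[OF \<tau>] by auto
    ultimately show "(v \<circ> \<tau>) k \<noteq> (v \<circ> \<tau>) (Suc k)"
      using v by (auto dest: inj_onD)
    show "\<forall>i<n. \<forall>j<n. u i \<noteq> t * (v \<circ> \<tau>) j"
      using uv permutes_in_image[OF \<tau>] by auto
  qed
  then have "2 * rhs_sum n t (u \<circ> ?s) v = 2 * rhs_sum n t u v"
    unfolding double by (rule sum.cong[OF refl])
  then show ?thesis by simp
qed

lemma rhs_sum_permute:
  assumes "\<sigma> permutes {..<n}" "inj_on v {..<n}" "\<forall>i<n. \<forall>j<n. u i \<noteq> t * v j"
  shows "rhs_sum n t (u \<circ> \<sigma>) v = rhs_sum n t u v"
proof (rule invariant_under_permutes_if_adjacent[where Q = "\<lambda>u. \<forall>i<n. \<forall>j<n. u i \<noteq> t * v j", OF _ _ assms(1,3)])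
  show "rhs_sum n t (u' \<circ> transpose k (Suc k)) v = rhs_sum n t u' v"
    if "\<forall>i<n. \<forall>j<n. u' i \<noteq> t * v j" "Suc k < n" for u' k
    using that assms(2) by (intro rhs_sum_transpose_adjacent)
  show "\<forall>i<n. \<forall>j<n. (u' \<circ> \<sigma>') i \<noteq> t * v j"
    if "\<forall>i<n. \<forall>j<n. u' i \<noteq> t * v j" "\<sigma>' permutes {..<n}" for u' \<sigma>'
    using that by (auto dest: permutes_in_image)
qed

lemma lhs_summand_eq_hl_prod_mult: "lhs_summand n t u w = hl_prod n t u * rhs_summand n t u w"
  unfolding lhs_summand_def rhs_summand_def hl_prod_def by (simp only: prod.distrib ac_simps)

theorem lemma3p8:
  fixes n :: nat and t :: complex and u v :: "nat \<Rightarrow> complex"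
  assumes "inj_on u {..<n}" and "inj_on v {..<n}"
    and "\<And>i j. i < n \<Longrightarrow> j < n \<Longrightarrow> u i \<noteq> t * v j"
    and "t \<noteq> 1"
  shows "(\<Sum>\<sigma>\<in>{\<sigma>. \<sigma> permutes {..<n}}. \<Sum>\<tau>\<in>{\<tau>. \<tau> permutes {..<n}}.
            lhs_summand n t (u \<circ> \<sigma>) (v \<circ> \<tau>))
       = qpoch t n / (1 - t) ^ n *
         (\<Sum>\<tau>\<in>{\<tau>. \<tau> permutes {..<n}}. rhs_summand n t u (v \<circ> \<tau>))"
proof -
  let ?P = "{\<sigma>. \<sigma> permutes {..<n}}"
  have uv: "\<forall>i<n. \<forall>j<n. u i \<noteq> t * v j"
    using assms(3) by blast
  have "(\<Sum>\<sigma>\<in>?P. \<Sum>\<tau>\<in>?P. lhs_summand n t (u \<circ> \<sigma>) (v \<circ> \<tau>))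
      = (\<Sum>\<sigma>\<in>?P. hl_prod n t (u \<circ> \<sigma>) * rhs_sum n t (u \<circ> \<sigma>) v)"
    by (simp add: lhs_summand_eq_hl_prod_mult rhs_sum_def sum_distrib_left)
  also have "\<dots> = (\<Sum>\<sigma>\<in>?P. hl_prod n t (u \<circ> \<sigma>)) * rhs_sum n t u v"
    using rhs_sum_permute[OF _ assms(2) uv] by (simp add: sum_distrib_right)
  also have "\<dots> = qpoch t n / (1 - t) ^ n * rhs_sum n t u v"
    unfolding sum_permutes_hl_prod[OF assms(1)] prod_sum_powers_eq_qpoch[OF assms(4)] ..
  finally show ?thesis
    unfolding rhs_sum_def .
qed

end
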